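(* Let $(E,\tau)$ be a violator space, $X\subseteq E$ and $x\in X$. Then $x$ is an extreme point of $X$ if and only if $x\in B$ for every $B\subseteq X$ with $\tau(B)=\tau(X)$.
   Context: $E$ is a finite set and $\tau:2^E\to 2^E$. $(E,\tau)$ is a violator space if (C1) $Y\subseteq\tau(Y)$ for all $Y\subseteq E$, and (C22) for all $F,G\subseteq E$, $F\subseteq G\subseteq\tau(F)$ implies $\tau(G)=\tau(F)$. An element $x\in X$ is an extreme point of $X$ if $x\notin\tau(X-\{x\})$. *)

theory Defs
  imports Main
begin

text \<open>A violator space (E, tau): E finite, tau maps subsets of E to subsets of E,
 satisfying (C1) extensivity and (C22) consistency.\<close>
definition violator_space :: "'a set \<Rightarrow> ('a set \<Rightarrow> 'a set) \<Rightarrow> bool" where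
  "violator_space E \<tau> \<longleftrightarrow>
     finite E \<and>
     (\<forall>Y. Y \<subseteq> E \<longrightarrow> \<tau> Y \<subseteq> E) \<and>
     (\<forall>Y. Y \<subseteq> E \<longrightarrow> Y \<subseteq> \<tau> Y) \<and>
     (\<forall>F G. F \<subseteq> E \<longrightarrow> G \<subseteq> E \<longrightarrow> F \<subseteq> G \<longrightarrow> G \<subseteq> \<tau> F \<longrightarrow> \<tau> G = \<tau> F)"

definition extreme_point :: "('a set \<Rightarrow> 'a set) \<Rightarrow> 'a set \<Rightarrow> 'a \<Rightarrow> bool" where
  "extreme_point \<tau> X x \<longleftrightarrow> x \<in> X \<and> x \<notin> \<tau> (X - {x})"

end

theory Submission
  imports Defs
begin

text \<open>Both directions reduce to: x is extreme iff removing it changes tau. If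
  x \<in> tau(X - {x}) then X \<subseteq> tau(X - {x}), so (C22) gives tau X = tau(X - {x}); and
  any B \<subseteq> X with tau B = tau X avoiding x is sandwiched as B \<subseteq> X - {x} \<subseteq> X \<subseteq> tau B,
  so (C22) again forces tau(X - {x}) = tau X.\<close>

lemma violator_space_extensive:
  assumes "violator_space E \<tau>" and "Y \<subseteq> E"
  shows "Y \<subseteq> \<tau> Y"
  using assms unfolding violator_space_def by blast

lemma violator_space_consistent:
  assumes "violator_space E \<tau>" and "G \<subseteq> E" and "F \<subseteq> G" and "G \<subseteq> \<tau> F"
  shows "\<tau> G = \<tau> F"
  using assms unfolding violator_space_def by (meson order_trans)

lemma violator_space_tau_eq_between:
  assumes vs: "violator_space E \<tau>" and "X \<subseteq> E" and "B \<subseteq> Y" and "Y \<subseteq> X"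
    and tau_eq: "\<tau> B = \<tau> X"
  shows "\<tau> Y = \<tau> X"
proof -
  have "Y \<subseteq> \<tau> B"
    using violator_space_extensive[OF vs \<open>X \<subseteq> E\<close>] tau_eq \<open>Y \<subseteq> X\<close> by blast
  moreover have "Y \<subseteq> E"
    using \<open>Y \<subseteq> X\<close> \<open>X \<subseteq> E\<close> by (rule order_trans)
  ultimately have "\<tau> Y = \<tau> B"
    using violator_space_consistent[OF vs _ \<open>B \<subseteq> Y\<close>] by blast
  with tau_eq show ?thesis by simp
qed

lemma extreme_point_iff_tau_remove_neq:
  assumes vs: "violator_space E \<tau>" and "X \<subseteq> E" and "x \<in> X"
  shows "extreme_point \<tau> X x \<longleftrightarrow> \<tau> (X - {x}) \<noteq> \<tau> X"
proof
  assume "extreme_point \<tau> X x"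
  then show "\<tau> (X - {x}) \<noteq> \<tau> X"
    using violator_space_extensive[OF vs \<open>X \<subseteq> E\<close>] \<open>x \<in> X\<close>
    unfolding extreme_point_def by auto
next
  assume neq: "\<tau> (X - {x}) \<noteq> \<tau> X"
  show "extreme_point \<tau> X x"
    unfolding extreme_point_def
  proof (intro conjI \<open>x \<in> X\<close> notI)
    assume "x \<in> \<tau> (X - {x})"
    moreover have "X - {x} \<subseteq> \<tau> (X - {x})"
      using violator_space_extensive[OF vs] \<open>X \<subseteq> E\<close> by blast
    ultimately have "X \<subseteq> \<tau> (X - {x})" by blast
    then have "\<tau> X = \<tau> (X - {x})"
      by (rule violator_space_consistent[OF vs \<open>X \<subseteq> E\<close> Diff_subset])
    with neq show False by simp
  qed
qed

theorem mainTheorem12: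
  assumes "violator_space E \<tau>" and "X \<subseteq> E" and "x \<in> X"
  shows "extreme_point \<tau> X x \<longleftrightarrow> (\<forall>B. B \<subseteq> X \<longrightarrow> \<tau> B = \<tau> X \<longrightarrow> x \<in> B)"
  unfolding extreme_point_iff_tau_remove_neq[OF assms]
proof
  assume neq: "\<tau> (X - {x}) \<noteq> \<tau> X"
  show "\<forall>B. B \<subseteq> X \<longrightarrow> \<tau> B = \<tau> X \<longrightarrow> x \<in> B"
  proof (intro allI impI, rule ccontr)
    fix B assume "B \<subseteq> X" "\<tau> B = \<tau> X" "x \<notin> B"
    then have "\<tau> (X - {x}) = \<tau> X"
      using violator_space_tau_eq_between[OF assms(1,2), of B "X - {x}"] by blast
    with neq show False ..
  qed
next
  assume "\<forall>B. B \<subseteq> X \<longrightarrow> \<tau> B = \<tau> X \<longrightarrow> x \<in> B"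
  then show "\<tau> (X - {x}) \<noteq> \<tau> X"
    by (metis Diff_subset insertI1 DiffD2)
qed

end
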